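(* For all $m\in\mathbb{N}$, $\delta\in(0,1)$ and $\boldsymbol{\mu}\in\Delta_\mathbb{N}$, if $\boldsymbol{X}=(X_1,\dots,X_m)\sim\boldsymbol{\mu}^m$ and $\widehat{\boldsymbol{\mu}}_m$ is its empirical measure, then with probability at least $1-\delta$, $$\|\widehat{\boldsymbol{\mu}}_m-\boldsymbol{\mu}\|_{TV}\ge \frac{1}{4\sqrt2}\Phi_m(\widehat{\boldsymbol{\mu}}_m)-3\sqrt{\frac{\log(2/\delta)}{m}}.$$
   Context: $\Delta_\mathbb{N}$ is the set of probability distributions on $\mathbb{N}=\{1,2,\dots\}$. For $\boldsymbol{X}=(X_1,\dots,X_m)$ i.i.d. from $\boldsymbol{\mu}$, the empirical measure is $\widehat{\boldsymbol{\mu}}_m(i)=\frac1m\sum_{t=1}^m\mathbb{I}\{X_t=i\}$. $\|\boldsymbol{\mu}-\boldsymbol{\nu}\|_{TV}=\frac12\sum_{i}|\boldsymbol{\mu}(i)-\boldsymbol{\nu}(i)|$. $\Phi_m(\widehat{\boldsymbol{\mu}}_m):=\frac1{\sqrt m}\sum_{j\in\mathbb{N}}\sqrt{\widehat{\boldsymbol{\mu}}_m(j)}$. $\log$ is the natural logarithm. *)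

theory Defs
  imports "HOL-Probability.Probability"
begin

definition emp_measure :: "nat \<Rightarrow> nat list \<Rightarrow> nat \<Rightarrow> real" where
  "emp_measure m xs i = real (count_list xs i) / real m"

definition tv_dist :: "(nat \<Rightarrow> real) \<Rightarrow> (nat \<Rightarrow> real) \<Rightarrow> real" where
  "tv_dist p q = (1/2) * (\<Sum>\<^sub>\<infinity>i\<in>UNIV. \<bar>p i - q i\<bar>)"

definition Phi :: "nat \<Rightarrow> (nat \<Rightarrow> real) \<Rightarrow> real" where
  "Phi m nu = (1 / sqrt (real m)) * (\<Sum>\<^sub>\<infinity>j\<in>UNIV. sqrt (nu j))"

end

theory Submission
  imports Defs
begin

text \<open>Let \<open>J = {..<N}\<close> carry all but \<open>1 / sqrt m\<close> of the mass of \<open>\<mu>\<close> and \<open>K = 1 / (4 sqrt 2)\<close>.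
  Bounding \<open>sqrt k \<le> k\<close> on the atoms outside \<open>J\<close> gives a statistic \<open>G\<close> of the sample with
  \<open>G \<le> TV - K \<Phi>\<close> pointwise. Changing one sample point moves \<open>G\<close> by at most \<open>(1 + 2K) / m\<close>, so
  McDiarmid's inequality keeps \<open>G\<close> above \<open>E G - 3 sqrt (ln (2/\<delta>) / m) + 3K / sqrt m\<close> except with
  probability \<open>\<delta> / 2\<close>. Finally \<open>E G \<ge> -3K / sqrt m\<close>, atom by atom: if \<open>\<mu> j \<le> 1/4\<close>, the second and fourth central moments of
  the binomial count \<open>c\<close> of \<open>j\<close> give \<open>E sqrt c \<le> 2 sqrt 2 E |c - m \<mu> j|\<close>; otherwise Jensen gives
  \<open>E sqrt c \<le> sqrt (m \<mu> j) \<le> 2 sqrt m \<mu> j\<close>.\<close>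

section \<open>Expectations over i.i.d. samples\<close>

lemma integrable_measure_pmf_bounded:
  fixes f :: "'a \<Rightarrow> real"
  assumes "\<And>x. x \<in> set_pmf p \<Longrightarrow> \<bar>f x\<bar> \<le> B"
  shows "integrable (measure_pmf p) f"
  by (rule measure_pmf.integrable_const_bound[where B=B]) (auto simp: AE_measure_pmf_iff assms)

lemma integrable_measure_pmf_comp_bounded_nat:
  fixes h :: "nat \<Rightarrow> real"
  assumes "\<And>x. x \<in> set_pmf p \<Longrightarrow> g x \<le> N"
  shows "integrable (measure_pmf p) (\<lambda>x. h (g x))"
proof (rule integrable_measure_pmf_bounded[where B="\<Sum>k\<le>N. \<bar>h k\<bar>"])
  fix x assume "x \<in> set_pmf p"
  then have "g x \<in> {..N}" using assms by auto
  then show "\<bar>h (g x)\<bar> \<le> (\<Sum>k\<le>N. \<bar>h k\<bar>)"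
    by (rule member_le_sum[where f="\<lambda>k. \<bar>h k\<bar>", simplified]) auto
qed

lemma expectation_bind_pmf_bounded:
  fixes f :: "'b \<Rightarrow> real"
  assumes B: "\<And>y. y \<in> set_pmf (bind_pmf p q) \<Longrightarrow> \<bar>f y\<bar> \<le> B"
  shows "measure_pmf.expectation (bind_pmf p q) f =
         measure_pmf.expectation p (\<lambda>x. measure_pmf.expectation (q x) f)"
proof -
  \<comment> \<open>\<open>integral_bind\<close> needs a bound everywhere, not only on the support; hence the clipping.\<close>
  define g where "g y = max (-\<bar>B\<bar>) (min \<bar>B\<bar> (f y))" for y
  have gf: "g y = f y" if "y \<in> set_pmf (bind_pmf p q)" for y
    using B[OF that] by (auto simp: g_def)
  have "measure_pmf.expectation (bind_pmf p q) f = measure_pmf.expectation (bind_pmf p q) g"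
    by (intro integral_cong_AE) (auto simp: AE_measure_pmf_iff gf)
  also have "\<dots> = measure_pmf.expectation p (\<lambda>x. measure_pmf.expectation (q x) g)"
    unfolding measure_pmf_bind
    by (rule integral_bind[where K="count_space UNIV" and B="\<bar>B\<bar>" and B'=1])
       (auto simp: g_def measure_pmf.emeasure_space_1 measure_pmf_in_subprob_algebra
             intro!: measure_pmf.finite_measure)
  also have "\<dots> = measure_pmf.expectation p (\<lambda>x. measure_pmf.expectation (q x) f)"
  proof (intro integral_cong_AE)
    show "AE x in measure_pmf p. measure_pmf.expectation (q x) g = measure_pmf.expectation (q x) f"
      unfolding AE_measure_pmf_iff
    proof
      fix x assume "x \<in> set_pmf p"
      then show "measure_pmf.expectation (q x) g = measure_pmf.expectation (q x) f"
        by (intro integral_cong_AE) (auto simp: AE_measure_pmf_iff intro!: gf)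
    qed
  qed auto
  finally show ?thesis .
qed

lemma expectation_replicate_pmf_Suc:
  fixes f :: "'a list \<Rightarrow> real"
  assumes "\<And>xs. length xs = Suc n \<Longrightarrow> \<bar>f xs\<bar> \<le> B"
  shows "measure_pmf.expectation (replicate_pmf (Suc n) p) f =
         measure_pmf.expectation p
           (\<lambda>x. measure_pmf.expectation (replicate_pmf n p) (\<lambda>xs. f (x # xs)))"
proof -
  have "replicate_pmf (Suc n) p = bind_pmf p (\<lambda>x. map_pmf ((#) x) (replicate_pmf n p))"
    by (simp add: map_pmf_def)
  also have "measure_pmf.expectation \<dots> f = measure_pmf.expectation p
      (\<lambda>x. measure_pmf.expectation (map_pmf ((#) x) (replicate_pmf n p)) f)"
    by (rule expectation_bind_pmf_bounded[where B=B]) (auto simp: set_replicate_pmf assms)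
  finally show ?thesis by simp
qed

lemma measure_pmf_prob_ge_one_minus:
  assumes "\<And>x. x \<in> set_pmf p \<Longrightarrow> x \<notin> B \<Longrightarrow> x \<in> A" and "measure_pmf.prob p B \<le> e"
  shows "measure_pmf.prob p A \<ge> 1 - e"
proof -
  have "1 - measure_pmf.prob p B = measure_pmf.prob p (- B \<inter> set_pmf p)"
    using measure_pmf.prob_compl[of B p] by (simp add: measure_Int_set_pmf Compl_eq_Diff_UNIV)
  also have "\<dots> \<le> measure_pmf.prob p A"
    using assms(1) by (intro measure_pmf.finite_measure_mono) auto
  finally show ?thesis using assms(2) by linarith
qed

section \<open>McDiarmid's inequality\<close>

definition bounded_differences :: "nat \<Rightarrow> real \<Rightarrow> ('a list \<Rightarrow> real) \<Rightarrow> bool" where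
  "bounded_differences n c f \<longleftrightarrow>
     (\<forall>xs i y. length xs = n \<longrightarrow> i < n \<longrightarrow> \<bar>f (xs[i := y]) - f xs\<bar> \<le> c)"

lemma bounded_differences_Cons:
  "bounded_differences (Suc n) c f \<Longrightarrow> bounded_differences n c (\<lambda>xs. f (x # xs))"
  unfolding bounded_differences_def
proof (intro allI impI)
  fix xs :: "'a list" and i y
  assume "\<forall>xs i y. length xs = Suc n \<longrightarrow> i < Suc n \<longrightarrow> \<bar>f (xs[i := y]) - f xs\<bar> \<le> c"
    and "length xs = n" "i < n"
  then show "\<bar>f (x # xs[i := y]) - f (x # xs)\<bar> \<le> c"
    by (metis Suc_less_eq length_Cons list_update_code(3))
qed

lemma bounded_differences_head:
  "bounded_differences (Suc n) c f \<Longrightarrow> length xs = n \<Longrightarrow> \<bar>f (x # xs) - f (y # xs)\<bar> \<le> c"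
  unfolding bounded_differences_def
  by (drule spec[of _ "y # xs"], drule spec[of _ 0], drule spec[of _ x]) simp

lemma bounded_differences_uminus:
  "bounded_differences n c f \<Longrightarrow> bounded_differences n c (\<lambda>xs. - f xs)"
  unfolding bounded_differences_def by (metis abs_minus_commute minus_diff_eq minus_diff_minus)

lemma bounded_differences_abs_diff_le:
  "bounded_differences n c f \<Longrightarrow> length xs = n \<Longrightarrow> length ys = n \<Longrightarrow>
     \<bar>f xs - f ys\<bar> \<le> real n * c"
proof (induction n arbitrary: f xs ys)
  case (Suc n)
  obtain x xs' y ys' where xs: "xs = x # xs'" and ys: "ys = y # ys'"
    using Suc.prems by (metis length_Suc_conv)
  have "length xs' = n" "length ys' = n" using Suc.prems xs ys by auto
  then have "\<bar>f (x # xs') - f (y # xs')\<bar> \<le> c" "\<bar>f (y # xs') - f (y # ys')\<bar> \<le> real n * c"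
    using bounded_differences_head[OF Suc.prems(1)] Suc.IH[OF bounded_differences_Cons[OF Suc.prems(1)]]
    by auto
  then show ?case using xs ys by (simp add: algebra_simps)
qed simp

lemma bounded_differences_imp_bounded:
  assumes "bounded_differences n c f"
  obtains B where "\<And>xs. length xs = n \<Longrightarrow> \<bar>f xs\<bar> \<le> B"
proof
  fix xs :: "'a list" assume "length xs = n"
  then show "\<bar>f xs\<bar> \<le> \<bar>f (replicate n undefined)\<bar> + real n * c"
    using bounded_differences_abs_diff_le[OF assms, of xs "replicate n undefined"] by simp
qed

lemma hoeffding_lemma_pmf:
  fixes g :: "'a \<Rightarrow> real"
  assumes "\<And>x y. x \<in> set_pmf p \<Longrightarrow> y \<in> set_pmf p \<Longrightarrow> g x - g y \<le> c" and "l > 0"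
  shows "(\<integral>\<^sup>+x. ennreal (exp (l * (g x - measure_pmf.expectation p g))) \<partial>p)
           \<le> ennreal (exp (l\<^sup>2 * c\<^sup>2 / 8))"
proof -
  define a where "a = Inf (g ` set_pmf p)"
  obtain x0 where x0: "x0 \<in> set_pmf p" using set_pmf_not_empty[of p] by blast
  have "bdd_below (g ` set_pmf p)"
    unfolding bdd_below_def using assms(1)[OF x0] by (intro exI[of _ "g x0 - c"]) (auto simp: algebra_simps)
  then have "a \<le> g x" if "x \<in> set_pmf p" for x
    unfolding a_def using that by (intro cInf_lower) auto
  moreover have "g x \<le> a + c" if "x \<in> set_pmf p" for x
  proof -
    have "g x - c \<le> a" unfolding a_def
      using x0 assms(1)[OF that] by (intro cInf_greatest) (auto simp: algebra_simps)
    then show ?thesis by simp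
  qed
  ultimately interpret interval_bounded_random_variable "measure_pmf p" g a "a + c"
    by unfold_locales (auto simp: AE_measure_pmf_iff)
  show ?thesis using Hoeffdings_lemma_nn_integral[OF \<open>l > 0\<close>] by simp
qed

lemma expectation_Cons_diff_le:
  assumes "bounded_differences (Suc n) c f"
  shows "measure_pmf.expectation (replicate_pmf n p) (\<lambda>xs. f (x # xs))
           - measure_pmf.expectation (replicate_pmf n p) (\<lambda>xs. f (y # xs)) \<le> c"
proof -
  obtain B where B: "\<And>xs. length xs = Suc n \<Longrightarrow> \<bar>f xs\<bar> \<le> B"
    using bounded_differences_imp_bounded[OF assms] by blast
  have int: "integrable (measure_pmf (replicate_pmf n p)) (\<lambda>xs. f (z # xs))" for z
    by (rule integrable_measure_pmf_bounded[where B=B]) (auto simp: set_replicate_pmf B)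
  have "measure_pmf.expectation (replicate_pmf n p) (\<lambda>xs. f (x # xs))
          \<le> measure_pmf.expectation (replicate_pmf n p) (\<lambda>xs. f (y # xs) + c)"
    using bounded_differences_head[OF assms]
    by (intro integral_mono_AE int Bochner_Integration.integrable_add)
       (auto simp: AE_measure_pmf_iff set_replicate_pmf abs_le_iff algebra_simps)
  then show ?thesis using int by simp
qed

lemma mcdiarmid_mgf:
  fixes f :: "'a list \<Rightarrow> real"
  assumes "bounded_differences n c f" and "l > 0"
  shows "(\<integral>\<^sup>+xs. ennreal (exp (l * (f xs - measure_pmf.expectation (replicate_pmf n p) f)))
            \<partial>replicate_pmf n p) \<le> ennreal (exp (l\<^sup>2 * real n * c\<^sup>2 / 8))"
  using assms(1)
proof (induction n arbitrary: f)
  case (Suc n)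
  obtain B where B: "\<And>xs. length xs = Suc n \<Longrightarrow> \<bar>f xs\<bar> \<le> B"
    using bounded_differences_imp_bounded[OF Suc.prems] by blast
  define g where "g x = measure_pmf.expectation (replicate_pmf n p) (\<lambda>xs. f (x # xs))" for x
  define E where "E = measure_pmf.expectation (replicate_pmf (Suc n) p) f"
  define C where "C = exp (l\<^sup>2 * real n * c\<^sup>2 / 8)"
  have E: "E = measure_pmf.expectation p g"
    unfolding E_def g_def by (rule expectation_replicate_pmf_Suc[OF B])
  have "(\<integral>\<^sup>+xs. ennreal (exp (l * (f xs - E))) \<partial>replicate_pmf (Suc n) p)
      = (\<integral>\<^sup>+x. ennreal (exp (l * (g x - E))) *
           (\<integral>\<^sup>+xs. ennreal (exp (l * (f (x # xs) - g x))) \<partial>replicate_pmf n p) \<partial>p)"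
  proof -
    have "exp (l * (f (x # xs) - E)) = exp (l * (g x - E)) * exp (l * (f (x # xs) - g x))" for x xs
      by (simp add: algebra_simps flip: exp_add)
    then show ?thesis by (simp add: ennreal_mult nn_integral_cmult)
  qed
  also have "\<dots> \<le> (\<integral>\<^sup>+x. ennreal (exp (l * (g x - E))) * ennreal C \<partial>p)"
    using Suc.IH[OF bounded_differences_Cons[OF Suc.prems]]
    by (intro nn_integral_mono mult_left_mono) (auto simp: g_def C_def)
  also have "\<dots> = (\<integral>\<^sup>+x. ennreal (exp (l * (g x - measure_pmf.expectation p g))) \<partial>p) * ennreal C"
    by (simp add: E nn_integral_multc)
  also have "\<dots> \<le> ennreal (exp (l\<^sup>2 * c\<^sup>2 / 8)) * ennreal C"
    unfolding g_def
    by (intro mult_right_mono hoeffding_lemma_pmf expectation_Cons_diff_le Suc.prems \<open>l > 0\<close>) auto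
  also have "\<dots> = ennreal (exp (l\<^sup>2 * real (Suc n) * c\<^sup>2 / 8))"
    by (simp add: C_def algebra_simps flip: ennreal_mult exp_add)
  finally show ?case by (simp add: E_def)
qed simp

lemma mcdiarmid_inequality:
  fixes f :: "'a list \<Rightarrow> real"
  assumes "bounded_differences n c f" and "n > 0" "c > 0" "s > 0"
  shows "measure_pmf.prob (replicate_pmf n p)
           {xs. f xs - measure_pmf.expectation (replicate_pmf n p) f \<ge> s}
         \<le> exp (- 2 * s\<^sup>2 / (real n * c\<^sup>2))"
proof -
  define E where "E = measure_pmf.expectation (replicate_pmf n p) f"
  define l where "l = 4 * s / (real n * c\<^sup>2)"
  have l: "l > 0" using assms by (simp add: l_def)
  have "ennreal (measure_pmf.prob (replicate_pmf n p) {xs. f xs - E \<ge> s})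
      = emeasure (replicate_pmf n p) {xs \<in> UNIV. f xs - E \<ge> s}"
    by (simp add: measure_pmf.emeasure_eq_measure)
  also have "\<dots> \<le> ennreal (exp (- l * s)) *
      (\<integral>\<^sup>+xs. ennreal (exp (l * (f xs - E))) * indicator UNIV xs \<partial>replicate_pmf n p)"
    by (rule Chernoff_ineq_nn_integral_ge) (use l in auto)
  also have "\<dots> \<le> ennreal (exp (- l * s)) * ennreal (exp (l\<^sup>2 * real n * c\<^sup>2 / 8))"
    using mcdiarmid_mgf[OF assms(1) l] by (intro mult_left_mono) (auto simp: E_def)
  also have "\<dots> = ennreal (exp (- 2 * s\<^sup>2 / (real n * c\<^sup>2)))"
    using assms by (simp add: l_def power2_eq_square field_simps flip: ennreal_mult exp_add)
  finally show ?thesis by (simp add: E_def)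
qed

lemma mcdiarmid_inequality_lower:
  fixes f :: "'a list \<Rightarrow> real"
  assumes "bounded_differences n c f" and "n > 0" "c > 0" "s > 0"
  shows "measure_pmf.prob (replicate_pmf n p)
           {xs. f xs \<le> measure_pmf.expectation (replicate_pmf n p) f - s}
         \<le> exp (- 2 * s\<^sup>2 / (real n * c\<^sup>2))"
  using mcdiarmid_inequality[OF bounded_differences_uminus[OF assms(1)] assms(2-4), of p]
  by (simp add: algebra_simps)

lemma mcdiarmid_prob_ge:
  fixes f :: "'a list \<Rightarrow> real"
  assumes "bounded_differences n c f" and "n > 0" "c > 0" "s > 0"
    and "exp (- 2 * s\<^sup>2 / (real n * c\<^sup>2)) \<le> e"
    and "\<And>xs. f xs > measure_pmf.expectation (replicate_pmf n p) f - s \<Longrightarrow> xs \<in> A"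
  shows "measure_pmf.prob (replicate_pmf n p) A \<ge> 1 - e"
proof (rule measure_pmf_prob_ge_one_minus)
  show "measure_pmf.prob (replicate_pmf n p)
      {xs. f xs \<le> measure_pmf.expectation (replicate_pmf n p) f - s} \<le> e"
    using mcdiarmid_inequality_lower[OF assms(1-4), of p] assms(5) by linarith
qed (use assms(6) in force)

section \<open>Central moments of binomial counts\<close>

text \<open>The deviation is taken from \<open>length xs * q\<close> rather than from a fixed sample size,
  so that it is additive under \<open>Cons\<close>.\<close>

definition count_deviation :: "('a \<Rightarrow> bool) \<Rightarrow> real \<Rightarrow> 'a list \<Rightarrow> real" where
  "count_deviation P q xs = real (length (filter P xs)) - real (length xs) * q"

definition count_moment :: "'a pmf \<Rightarrow> ('a \<Rightarrow> bool) \<Rightarrow> nat \<Rightarrow> nat \<Rightarrow> real" where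
  "count_moment p P k n = measure_pmf.expectation (replicate_pmf n p)
     (\<lambda>xs. count_deviation P (measure_pmf.prob p {x. P x}) xs ^ k)"

lemma abs_count_deviation_le:
  assumes "0 \<le> q" "q \<le> 1"
  shows "\<bar>count_deviation P q xs\<bar> \<le> real (length xs)"
proof -
  have "real (length (filter P xs)) \<le> real (length xs)" by simp
  moreover have "0 \<le> real (length xs) * q" "real (length xs) * q \<le> real (length xs)"
    using assms by (simp_all add: mult_left_le)
  ultimately show ?thesis
    unfolding count_deviation_def abs_le_iff by linarith
qed

lemma count_deviation_Cons:
  "count_deviation P q (x # xs) = count_deviation P q xs + ((if P x then 1 else 0) - q)"
  by (simp add: count_deviation_def algebra_simps)

lemma integrable_count_deviation_power:
  assumes "0 \<le> q" "q \<le> 1"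
  shows "integrable (measure_pmf (replicate_pmf n p)) (\<lambda>xs. count_deviation P q xs ^ k)"
  by (intro integrable_measure_pmf_bounded[where B="real n ^ k"])
     (auto simp: set_replicate_pmf power_abs
           intro!: power_mono abs_count_deviation_le[OF assms, of P, THEN order_trans])

lemma expectation_pmf_if_comp:
  fixes F :: "real \<Rightarrow> real"
  shows "measure_pmf.expectation p (\<lambda>x. F (if P x then 1 else 0)) =
         measure_pmf.prob p {x. P x} * F 1 + (1 - measure_pmf.prob p {x. P x}) * F 0"
proof -
  have "(\<lambda>x. F (if P x then 1 else 0)) = (\<lambda>x. F 0 + (F 1 - F 0) * indicator {x. P x} x)"
    by (auto simp: indicator_def)
  then have "measure_pmf.expectation p (\<lambda>x. F (if P x then 1 else 0))
      = F 0 + (F 1 - F 0) * measure_pmf.prob p {x. P x}"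
    by (simp add: integrable_measure_pmf_bounded[where B=1])
  then show ?thesis by (simp add: algebra_simps)
qed

lemma count_moment_Suc:
  fixes p :: "'a pmf" and P :: "'a \<Rightarrow> bool"
  defines "q \<equiv> measure_pmf.prob p {x. P x}"
  shows "count_moment p P k (Suc n) = (\<Sum>i\<le>k. real (k choose i) * count_moment p P i n *
            (q * (1 - q) ^ (k - i) + (1 - q) * (- q) ^ (k - i)))"
proof -
  have q: "0 \<le> q" "q \<le> 1" by (auto simp: q_def)
  have binomial: "measure_pmf.expectation (replicate_pmf n p) (\<lambda>xs. (count_deviation P q xs + z) ^ k) =
     (\<Sum>i\<le>k. real (k choose i) * count_moment p P i n * z ^ (k - i))" for z
  proof -
    have "measure_pmf.expectation (replicate_pmf n p) (\<lambda>xs. (count_deviation P q xs + z) ^ k) =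
          measure_pmf.expectation (replicate_pmf n p)
            (\<lambda>xs. \<Sum>i\<le>k. real (k choose i) * z ^ (k - i) * count_deviation P q xs ^ i)"
      by (subst binomial_ring) (simp add: algebra_simps)
    also have "\<dots> = (\<Sum>i\<le>k. real (k choose i) * z ^ (k - i) *
        measure_pmf.expectation (replicate_pmf n p) (\<lambda>xs. count_deviation P q xs ^ i))"
      by (subst Bochner_Integration.integral_sum)
         (auto intro!: Bochner_Integration.integrable_mult_right integrable_count_deviation_power[OF q])
    finally show ?thesis by (simp add: count_moment_def q_def algebra_simps)
  qed
  have "count_moment p P k (Suc n) = measure_pmf.expectation p (\<lambda>x.
      measure_pmf.expectation (replicate_pmf n p)
        (\<lambda>xs. (count_deviation P q xs + ((if P x then 1 else 0) - q)) ^ k))"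
    unfolding count_moment_def q_def[symmetric]
    by (subst expectation_replicate_pmf_Suc[where B="real (Suc n) ^ k"])
       (auto simp: count_deviation_Cons power_abs intro!: power_mono
             abs_count_deviation_le[OF q, of P, THEN order_trans])
  also have "\<dots> = measure_pmf.expectation p (\<lambda>x. (\<lambda>b. \<Sum>i\<le>k. real (k choose i) * count_moment p P i n *
      (b - q) ^ (k - i)) (if P x then 1 else 0))"
    by (simp add: binomial)
  also have "\<dots> = q * (\<Sum>i\<le>k. real (k choose i) * count_moment p P i n * (1 - q) ^ (k - i))
               + (1 - q) * (\<Sum>i\<le>k. real (k choose i) * count_moment p P i n * (0 - q) ^ (k - i))"
    by (subst expectation_pmf_if_comp) (simp add: q_def)
  also have "\<dots> = (\<Sum>i\<le>k. real (k choose i) * count_moment p P i n *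
            (q * (1 - q) ^ (k - i) + (1 - q) * (- q) ^ (k - i)))"
    by (simp add: sum_distrib_left algebra_simps flip: sum.distrib)
  finally show ?thesis .
qed

lemma count_moment_0: "count_moment p P 0 n = 1"
  by (simp add: count_moment_def)

lemma count_moment_1: "count_moment p P 1 n = 0"
proof (induction n)
  case 0 then show ?case by (simp add: count_moment_def count_deviation_def)
qed (simp add: count_moment_Suc count_moment_0 algebra_simps)

lemma count_moment_2:
  "count_moment p P 2 n = real n * (measure_pmf.prob p {x. P x} * (1 - measure_pmf.prob p {x. P x}))"
proof (induction n)
  case 0 then show ?case by (simp add: count_moment_def count_deviation_def)
qed (simp add: count_moment_Suc count_moment_0 count_moment_1 numeral_2_eq_2 atMost_Suc
       algebra_simps power2_eq_square)

lemma count_moment_4_le: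
  fixes p :: "'a pmf" and P :: "'a \<Rightarrow> bool"
  defines "v \<equiv> measure_pmf.prob p {x. P x} * (1 - measure_pmf.prob p {x. P x})"
  shows "count_moment p P 4 n \<le> real n * v + 3 * (real n * v)\<^sup>2"
proof (induction n)
  case 0 then show ?case by (simp add: count_moment_def count_deviation_def)
next
  case (Suc n)
  define q where "q = measure_pmf.prob p {x. P x}"
  have q: "0 \<le> q" "q \<le> 1" by (auto simp: q_def)
  have "q * (1 - q) ^ 4 + (1 - q) * q ^ 4 = v * ((1 - q) ^ 3 + q ^ 3)"
    by (simp add: v_def q_def algebra_simps power_def numeral_eq_Suc)
  also have "\<dots> \<le> v"
  proof -
    have "(1 - q) ^ 3 \<le> 1 - q" "q ^ 3 \<le> q"
      using power_decreasing[of 1 3 q] power_decreasing[of 1 3 "1 - q"] q by auto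
    moreover have "0 \<le> v" using q by (simp add: v_def q_def)
    ultimately show ?thesis using mult_left_mono[of "(1 - q) ^ 3 + q ^ 3" 1 v] by simp
  qed
  finally have step: "q * (1 - q) ^ 4 + (1 - q) * q ^ 4 \<le> v" .
  have "count_moment p P 4 (Suc n) = (q * (1 - q) ^ 4 + (1 - q) * q ^ 4)
      + 6 * count_moment p P 2 n * v + count_moment p P 4 n"
    unfolding q_def v_def
    by (simp add: count_moment_Suc count_moment_0 count_moment_1 count_moment_1[unfolded One_nat_def]
        numeral_eq_Suc atMost_Suc algebra_simps power_def)
  also have "\<dots> \<le> v + 6 * (real n * v) * v + (real n * v + 3 * (real n * v)\<^sup>2)"
    using step Suc.IH by (simp add: count_moment_2 v_def)
  also have "\<dots> \<le> real (Suc n) * v + 3 * (real (Suc n) * v)\<^sup>2"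
    by (simp add: power2_eq_square algebra_simps)
  finally show ?case .
qed

lemma quartic_minorant_le_abs:
  fixes y s :: real
  assumes "s > 0"
  shows "3/4 * y\<^sup>2 / s - y ^ 4 / (16 * s ^ 3) \<le> \<bar>y\<bar>"
proof -
  define t where "t = \<bar>y\<bar>"
  have t: "t \<ge> 0" "y\<^sup>2 = t\<^sup>2" "y ^ 4 = t ^ 4"
    unfolding t_def by (simp_all add: power_even_abs)
  have "0 \<le> t * (t - 2 * s)\<^sup>2 * (t + 4 * s)"
    using t assms by (intro mult_nonneg_nonneg) auto
  also have "t * (t - 2 * s)\<^sup>2 * (t + 4 * s) = t ^ 4 - 12 * s\<^sup>2 * t\<^sup>2 + 16 * s ^ 3 * t"
    by algebra
  finally have "12 * s\<^sup>2 * t\<^sup>2 - t ^ 4 \<le> 16 * s ^ 3 * t" by linarith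
  then have "(12 * s\<^sup>2 * t\<^sup>2 - t ^ 4) / (16 * s ^ 3) \<le> t"
    using assms by (simp add: divide_le_eq mult.commute)
  moreover have "12 * s\<^sup>2 * t\<^sup>2 / (16 * s ^ 3) = 3/4 * t\<^sup>2 / s"
    using assms by (simp add: power2_eq_square power3_eq_cube)
  ultimately have "3/4 * t\<^sup>2 / s - t ^ 4 / (16 * s ^ 3) \<le> t"
    by (simp add: diff_divide_distrib)
  then show ?thesis unfolding t(2,3) t_def[symmetric] .
qed

lemma expectation_abs_count_deviation_ge:
  fixes p :: "'a pmf" and P :: "'a \<Rightarrow> bool"
  defines "q \<equiv> measure_pmf.prob p {x. P x}"
  assumes "s > 0"
  shows "3/4 * count_moment p P 2 n / s - count_moment p P 4 n / (16 * s ^ 3)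
           \<le> measure_pmf.expectation (replicate_pmf n p) (\<lambda>xs. \<bar>count_deviation P q xs\<bar>)"
proof -
  have q: "0 \<le> q" "q \<le> 1" by (auto simp: q_def)
  have "3/4 * count_moment p P 2 n / s - count_moment p P 4 n / (16 * s ^ 3) =
        measure_pmf.expectation (replicate_pmf n p)
          (\<lambda>xs. 3/4 * count_deviation P q xs ^ 2 / s - count_deviation P q xs ^ 4 / (16 * s ^ 3))"
  proof -
    have "count_moment p P k n =
        measure_pmf.expectation (replicate_pmf n p) (\<lambda>xs. count_deviation P q xs ^ k)" for k
      by (simp add: count_moment_def q_def)
    then show ?thesis
      by (simp add: integrable_count_deviation_power[OF q] Bochner_Integration.integral_diff)
  qed
  also have "\<dots> \<le> measure_pmf.expectation (replicate_pmf n p) (\<lambda>xs. \<bar>count_deviation P q xs\<bar>)"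
  proof (rule integral_mono)
    show "integrable (measure_pmf (replicate_pmf n p)) (\<lambda>xs. \<bar>count_deviation P q xs\<bar>)"
      by (rule integrable_measure_pmf_bounded[where B="real n"])
         (auto simp: set_replicate_pmf intro!: abs_count_deviation_le[OF q, of P, THEN order_trans])
  qed (use quartic_minorant_le_abs[OF \<open>s > 0\<close>] in
         \<open>auto intro!: Bochner_Integration.integrable_diff integrable_count_deviation_power[OF q]\<close>)
  finally show ?thesis .
qed

lemma integrable_count:
  fixes h :: "nat \<Rightarrow> real"
  shows "integrable (measure_pmf (replicate_pmf n p)) (\<lambda>xs. h (length (filter P xs)))"
  by (rule integrable_measure_pmf_comp_bounded_nat[where N=n])
     (auto simp: set_replicate_pmf intro: order_trans[OF length_filter_le])

lemma expectation_count:
  "measure_pmf.expectation (replicate_pmf n p) (\<lambda>xs. real (length (filter P xs)))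
     = real n * measure_pmf.prob p {x. P x}"
proof -
  define q where "q = measure_pmf.prob p {x. P x}"
  have "measure_pmf.expectation (replicate_pmf n p) (\<lambda>xs. real (length (filter P xs)))
      = measure_pmf.expectation (replicate_pmf n p) (\<lambda>xs. count_deviation P q xs + real n * q)"
    by (intro integral_cong_AE) (auto simp: AE_measure_pmf_iff set_replicate_pmf count_deviation_def)
  also have "\<dots> = count_moment p P 1 n + real n * q"
    using integrable_count_deviation_power[of q n p P 1] by (simp add: count_moment_def q_def)
  finally show ?thesis by (simp add: count_moment_1[unfolded One_nat_def] q_def)
qed

lemma sqrt_of_nat_le: "sqrt (real k) \<le> real k"
  by (rule real_le_lsqrt) (auto simp: power2_eq_square simp flip: of_nat_mult)

lemma expectation_sqrt_count_le:
  "measure_pmf.expectation (replicate_pmf n p) (\<lambda>xs. sqrt (real (length (filter P xs))))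
     \<le> real n * measure_pmf.prob p {x. P x}"
proof -
  have "measure_pmf.expectation (replicate_pmf n p) (\<lambda>xs. sqrt (real (length (filter P xs))))
      \<le> measure_pmf.expectation (replicate_pmf n p) (\<lambda>xs. real (length (filter P xs)))"
    by (intro integral_mono integrable_count sqrt_of_nat_le)
  then show ?thesis by (simp add: expectation_count)
qed

lemma expectation_sqrt_count_le_sqrt:
  "measure_pmf.expectation (replicate_pmf n p) (\<lambda>xs. sqrt (real (length (filter P xs))))
     \<le> sqrt (real n * measure_pmf.prob p {x. P x})"
proof -
  define a where "a = real n * measure_pmf.prob p {x. P x}"
  have "0 \<le> a" by (simp add: a_def)
  show ?thesis
  proof (cases "a = 0")
    case True
    then show ?thesis
      using expectation_sqrt_count_le[of n p P] by (simp only: a_def[symmetric] real_sqrt_zero)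
  next
    case False
    with \<open>0 \<le> a\<close> have a: "a > 0" by simp
    have tangent: "sqrt (real k) \<le> (real k + a) / (2 * sqrt a)" for k
    proof -
      have "0 \<le> (sqrt (real k) - sqrt a)\<^sup>2" by simp
      also have "\<dots> = real k + a - 2 * sqrt (real k) * sqrt a"
        using a by (simp add: power2_eq_square algebra_simps)
      finally show ?thesis using a by (simp add: le_divide_eq mult_ac)
    qed
    have "measure_pmf.expectation (replicate_pmf n p) (\<lambda>xs. sqrt (real (length (filter P xs))))
        \<le> measure_pmf.expectation (replicate_pmf n p)
              (\<lambda>xs. (real (length (filter P xs)) + a) / (2 * sqrt a))"
      by (intro integral_mono integrable_count tangent)
    also have "\<dots> = (a + a) / (2 * sqrt a)"
      using integrable_count[of n p "\<lambda>k. real k" P] by (simp add: expectation_count a_def)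
    also have "\<dots> = sqrt a" using a by (simp add: real_div_sqrt)
    finally show ?thesis by (simp add: a_def)
  qed
qed

text \<open>The scale in the quartic minorant of \<open>|y|\<close> is \<open>s = sqrt v\<close> in the first case and \<open>s = 1\<close>
  in the second.\<close>

lemma expectation_abs_count_deviation_ge_variance:
  fixes p :: "'a pmf" and P :: "'a \<Rightarrow> bool" and n :: nat
  defines "q \<equiv> measure_pmf.prob p {x. P x}"
  defines "v \<equiv> real n * (q * (1 - q))"
  shows "1 \<le> v \<Longrightarrow> sqrt v / 2 \<le> measure_pmf.expectation (replicate_pmf n p) (\<lambda>xs. \<bar>count_deviation P q xs\<bar>)"
    and "v \<le> 1 \<Longrightarrow> v / 2 \<le> measure_pmf.expectation (replicate_pmf n p) (\<lambda>xs. \<bar>count_deviation P q xs\<bar>)"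
proof -
  define EA where "EA = measure_pmf.expectation (replicate_pmf n p) (\<lambda>xs. \<bar>count_deviation P q xs\<bar>)"
  have lower: "3/4 * v / s - (v + 3 * v\<^sup>2) / (16 * s ^ 3) \<le> EA" if "s > 0" for s
  proof -
    have "count_moment p P 4 n / (16 * s ^ 3) \<le> (v + 3 * v\<^sup>2) / (16 * s ^ 3)"
      using count_moment_4_le[of p P n] that by (intro divide_right_mono) (auto simp: v_def q_def)
    then show ?thesis
      using expectation_abs_count_deviation_ge[OF that, of p P n]
      by (simp add: count_moment_2 v_def EA_def q_def)
  qed
  show "sqrt v / 2 \<le> EA" if "1 \<le> v"
  proof -
    define s where "s = sqrt v"
    have s: "s \<ge> 1" "s\<^sup>2 = v" using that by (auto simp: s_def)
    have "1 / s \<le> s" by (rule order_trans[of _ 1]) (use s in auto)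
    then have "s / 2 \<le> s / 2 + (s - 1 / s) / 16" by simp
    also have "\<dots> = 3/4 * v / s - (v + 3 * v\<^sup>2) / (16 * s ^ 3)"
      using s by (simp add: field_simps power2_eq_square power3_eq_cube flip: s(2))
    also have "\<dots> \<le> EA" using s by (intro lower) simp
    finally show ?thesis by (simp add: s_def)
  qed
  show "v / 2 \<le> EA" if "v \<le> 1"
  proof -
    have "0 \<le> v" by (simp add: v_def q_def)
    with that have "v\<^sup>2 \<le> v" by (simp add: power2_eq_square mult_left_le_one_le)
    moreover have "3/4 * v - (v + 3 * v\<^sup>2) / 16 \<le> EA" using lower[of 1] by simp
    moreover have "(v + 3 * v\<^sup>2) / 16 = v / 16 + 3/16 * v\<^sup>2" by simp
    ultimately show ?thesis by linarith
  qed
qed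

lemma expectation_sqrt_count_le_abs_deviation:
  fixes p :: "'a pmf" and P :: "'a \<Rightarrow> bool"
  defines "q \<equiv> measure_pmf.prob p {x. P x}"
  assumes "q \<le> 1/4"
  shows "measure_pmf.expectation (replicate_pmf n p) (\<lambda>xs. sqrt (real (length (filter P xs))))
           \<le> 2 * sqrt 2 * measure_pmf.expectation (replicate_pmf n p) (\<lambda>xs. \<bar>count_deviation P q xs\<bar>)"
proof -
  define a where "a = real n * q"
  define v where "v = real n * (q * (1 - q))"
  define ES where "ES = measure_pmf.expectation (replicate_pmf n p) (\<lambda>xs. sqrt (real (length (filter P xs))))"
  define EA where "EA = measure_pmf.expectation (replicate_pmf n p) (\<lambda>xs. \<bar>count_deviation P q xs\<bar>)"
  have "0 \<le> q" by (simp add: q_def)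
  then have "a * (3/4) \<le> a * (1 - q)"
    using assms by (intro mult_left_mono) (auto simp: a_def)
  then have "a \<le> 4/3 * v" by (simp add: v_def a_def algebra_simps)
  show ?thesis
  proof (cases "v \<ge> 1")
    case True
    have "ES \<le> sqrt a" unfolding ES_def a_def q_def by (rule expectation_sqrt_count_le_sqrt)
    also have "\<dots> \<le> sqrt 2 * sqrt v" using \<open>a \<le> 4/3 * v\<close> True by (simp flip: real_sqrt_mult)
    also have "\<dots> \<le> sqrt 2 * (2 * EA)"
      using expectation_abs_count_deviation_ge_variance(1)[where p=p and P=P and n=n] True by (simp add: EA_def v_def q_def)
    finally show ?thesis by (simp add: ES_def EA_def)
  next
    case False
    have "4/3 \<le> sqrt (2::real)" by (rule real_le_rsqrt) (simp add: power2_eq_square)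
    have "ES \<le> a" unfolding ES_def a_def q_def by (rule expectation_sqrt_count_le)
    also have "\<dots> \<le> sqrt 2 * v"
      using \<open>a \<le> 4/3 * v\<close> mult_right_mono[OF \<open>4/3 \<le> sqrt 2\<close>, of v] \<open>0 \<le> q\<close> assms
      by (simp add: v_def)
    also have "\<dots> \<le> sqrt 2 * (2 * EA)"
      using expectation_abs_count_deviation_ge_variance(2)[where p=p and P=P and n=n] False by (simp add: EA_def v_def q_def)
    finally show ?thesis by (simp add: ES_def EA_def)
  qed
qed

section \<open>A minorant of the total variation minus \<open>K \<Phi>\<close>\<close>

lemma sum_count_list:
  "finite A \<Longrightarrow> (\<Sum>j\<in>A. count_list xs j) = length (filter (\<lambda>x. x \<in> A) xs)"
proof (induction xs)
  case (Cons a xs)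
  have "(\<Sum>j\<in>A. count_list (a # xs) j) = (\<Sum>j\<in>A. count_list xs j + (if a = j then 1 else 0))"
    by (rule sum.cong) auto
  also have "\<dots> = (\<Sum>j\<in>A. count_list xs j) + (if a \<in> A then 1 else 0)"
    using Cons.prems by (simp add: sum.distrib)
  finally show ?case using Cons by simp
qed simp

lemma pmf_summable_on: "pmf p summable_on UNIV"
proof (rule nonneg_bdd_above_summable_on)
  show "bdd_above (sum (pmf p) ` {F. F \<subseteq> UNIV \<and> finite F})"
    unfolding bdd_above_def
    by (rule exI[of _ 1]) (auto simp flip: measure_measure_pmf_finite)
qed simp

lemma emp_measure_summable_on: "emp_measure m xs summable_on UNIV"
proof -
  have "emp_measure m xs summable_on set xs" by simp
  then show ?thesis
    by (subst summable_on_cong_neutral[where T="set xs" and g="emp_measure m xs"])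
       (auto simp: emp_measure_def)
qed

lemma tv_dist_emp_measure_ge_sum:
  assumes "finite J"
  shows "(\<Sum>j\<in>J. 1/2 * \<bar>emp_measure m xs j - pmf \<mu> j\<bar>) \<le> tv_dist (emp_measure m xs) (pmf \<mu>)"
proof -
  have "(\<lambda>j. \<bar>emp_measure m xs j - pmf \<mu> j\<bar>) summable_on UNIV"
  proof (rule summable_on_comparison_test)
    show "(\<lambda>j. emp_measure m xs j + pmf \<mu> j) summable_on UNIV"
      by (intro summable_on_add emp_measure_summable_on pmf_summable_on)
    fix j
    have "0 \<le> emp_measure m xs j" by (simp add: emp_measure_def)
    then show "\<bar>emp_measure m xs j - pmf \<mu> j\<bar> \<le> emp_measure m xs j + pmf \<mu> j"
      using pmf_nonneg[of \<mu> j] by (simp add: abs_le_iff)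
  qed auto
  then have "(\<Sum>j\<in>J. \<bar>emp_measure m xs j - pmf \<mu> j\<bar>) \<le> (\<Sum>\<^sub>\<infinity>j\<in>UNIV. \<bar>emp_measure m xs j - pmf \<mu> j\<bar>)"
    using assms by (intro finite_sum_le_infsum) auto
  then show ?thesis unfolding tv_dist_def by (simp add: sum_divide_distrib[symmetric])
qed

lemma Phi_emp_measure_le:
  assumes "finite J" "m > 0"
  shows "Phi m (emp_measure m xs) \<le>
     ((\<Sum>j\<in>J. sqrt (real (count_list xs j))) + real (length (filter (\<lambda>x. x \<notin> J) xs))) / real m"
proof -
  have "(\<Sum>\<^sub>\<infinity>j\<in>UNIV. sqrt (emp_measure m xs j)) = (\<Sum>\<^sub>\<infinity>j\<in>set xs. sqrt (emp_measure m xs j))"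
    by (rule infsum_cong_neutral) (auto simp: emp_measure_def)
  also have "\<dots> = (\<Sum>j\<in>set xs. sqrt (real (count_list xs j)) / sqrt (real m))"
    by (simp add: emp_measure_def real_sqrt_divide)
  finally have "Phi m (emp_measure m xs) = (\<Sum>j\<in>set xs. sqrt (real (count_list xs j))) / real m"
    using assms by (simp add: Phi_def sum_divide_distrib[symmetric])
  also have "(\<Sum>j\<in>set xs. sqrt (real (count_list xs j))) =
      (\<Sum>j\<in>set xs \<inter> J. sqrt (real (count_list xs j))) + (\<Sum>j\<in>set xs - J. sqrt (real (count_list xs j)))"
    by (rule sum.Int_Diff) simp
  also have "(\<Sum>j\<in>set xs \<inter> J. sqrt (real (count_list xs j))) \<le> (\<Sum>j\<in>J. sqrt (real (count_list xs j)))"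
    by (rule sum_mono2) (auto simp: assms)
  also have "(\<Sum>j\<in>set xs - J. sqrt (real (count_list xs j))) \<le> (\<Sum>j\<in>set xs - J. real (count_list xs j))"
    by (rule sum_mono) (rule sqrt_of_nat_le)
  also have "(\<Sum>j\<in>set xs - J. real (count_list xs j)) = real (length (filter (\<lambda>x. x \<in> set xs - J) xs))"
    by (simp flip: of_nat_sum add: sum_count_list)
  also have "filter (\<lambda>x. x \<in> set xs - J) xs = filter (\<lambda>x. x \<notin> J) xs"
    by (rule filter_cong) auto
  finally show ?thesis using assms by (simp add: divide_right_mono)
qed

text \<open>Outside the finite set \<open>J\<close> the bound \<open>sqrt k \<le> k\<close> turns the contribution to \<open>\<Phi>\<close> into
  a count of sample points, so that the minorant has bounded differences and its expectation
  is a finite sum over the atoms in \<open>J\<close>.\<close>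

definition atom_gap :: "nat pmf \<Rightarrow> nat \<Rightarrow> real \<Rightarrow> nat \<Rightarrow> nat \<Rightarrow> real" where
  "atom_gap \<mu> m K j k = 1/2 * \<bar>real k / real m - pmf \<mu> j\<bar> - K / real m * sqrt (real k)"

definition tv_Phi_minorant :: "nat pmf \<Rightarrow> nat \<Rightarrow> real \<Rightarrow> nat set \<Rightarrow> nat list \<Rightarrow> real" where
  "tv_Phi_minorant \<mu> m K J xs = (\<Sum>j\<in>J. atom_gap \<mu> m K j (count_list xs j))
     - K / real m * real (length (filter (\<lambda>x. x \<notin> J) xs))"

lemma tv_Phi_minorant_le:
  assumes "finite J" "m > 0" "K \<ge> 0"
  shows "tv_Phi_minorant \<mu> m K J xs \<le> tv_dist (emp_measure m xs) (pmf \<mu>) - K * Phi m (emp_measure m xs)"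
proof -
  have "tv_Phi_minorant \<mu> m K J xs = (\<Sum>j\<in>J. 1/2 * \<bar>emp_measure m xs j - pmf \<mu> j\<bar>)
      - K * (((\<Sum>j\<in>J. sqrt (real (count_list xs j))) + real (length (filter (\<lambda>x. x \<notin> J) xs))) / real m)"
    by (simp add: tv_Phi_minorant_def atom_gap_def emp_measure_def sum_subtractf sum_distrib_left
        sum_divide_distrib algebra_simps add_divide_distrib)
  then show ?thesis
    using tv_dist_emp_measure_ge_sum[OF assms(1), where m=m and xs=xs and \<mu>=\<mu>]
      mult_left_mono[OF Phi_emp_measure_le[OF assms(1,2), where xs=xs] assms(3)]
    by linarith
qed

lemma abs_length_filter_list_update_diff_le:
  assumes "i < length xs"
  shows "\<bar>real (length (filter P (xs[i := y]))) - real (length (filter P xs))\<bar>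
           \<le> of_bool (P y) + of_bool (P (xs ! i))"
proof -
  have "length (filter P (xs[i := y])) + of_bool (P (xs ! i)) = length (filter P xs) + of_bool (P y)"
    using assms
  proof (induction xs arbitrary: i)
    case (Cons a xs) then show ?case by (cases i) auto
  qed simp
  then show ?thesis by (auto simp: of_bool_def split: if_splits)
qed

lemma abs_sqrt_of_nat_diff_le: "\<bar>sqrt (real a) - sqrt (real b)\<bar> \<le> \<bar>real a - real b\<bar>"
proof (cases "a = b")
  case False
  then have "1 \<le> real a \<or> 1 \<le> real b" by linarith
  then have sum_ge_1: "1 \<le> sqrt (real a) + sqrt (real b)"
    by (metis add_increasing add_increasing2 real_sqrt_ge_one real_sqrt_ge_zero of_nat_0_le_iff)
  have "real a - real b = (sqrt (real a) - sqrt (real b)) * (sqrt (real a) + sqrt (real b))"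
    by (simp add: algebra_simps)
  then have "\<bar>real a - real b\<bar> = \<bar>sqrt (real a) - sqrt (real b)\<bar> * (sqrt (real a) + sqrt (real b))"
    by (simp add: abs_mult)
  with sum_ge_1 show ?thesis by (simp add: mult_le_cancel_left1)
qed simp

lemma atom_gap_lipschitz:
  assumes "m > 0" "K \<ge> 0"
  shows "\<bar>atom_gap \<mu> m K j a - atom_gap \<mu> m K j b\<bar>
           \<le> (1 / (2 * real m) + K / real m) * \<bar>real a - real b\<bar>"
proof -
  have half: "\<bar>1/2 * \<bar>A\<bar> - 1/2 * \<bar>B\<bar>\<bar> \<le> 1/2 * \<bar>A - B\<bar>" for A B :: real
    by (simp add: abs_if)
  have abs_part: "\<bar>1/2 * \<bar>real a / real m - pmf \<mu> j\<bar> - 1/2 * \<bar>real b / real m - pmf \<mu> j\<bar>\<bar>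
      \<le> 1 / (2 * real m) * \<bar>real a - real b\<bar>"
    using half[of "real a / real m - pmf \<mu> j" "real b / real m - pmf \<mu> j"]
    by (simp add: diff_divide_distrib[symmetric] abs_divide)
  have "\<bar>K / real m * (sqrt (real a) - sqrt (real b))\<bar> \<le> K / real m * \<bar>real a - real b\<bar>"
    using assms abs_sqrt_of_nat_diff_le[of a b] by (simp add: abs_mult mult_left_mono divide_right_mono)
  then have sqrt_part: "\<bar>K / real m * sqrt (real a) - K / real m * sqrt (real b)\<bar> \<le> K / real m * \<bar>real a - real b\<bar>"
    by (simp only: right_diff_distrib)
  show ?thesis using abs_part sqrt_part unfolding atom_gap_def by (simp add: algebra_simps) linarith
qed

lemma abs_atom_gap_list_update_diff_le:
  assumes "m > 0" "K \<ge> 0" "i < length xs"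
  shows "\<bar>atom_gap \<mu> m K j (count_list (xs[i := y]) j) - atom_gap \<mu> m K j (count_list xs j)\<bar>
           \<le> (1 / (2 * real m) + K / real m) * (of_bool (j = y) + of_bool (j = xs ! i))"
proof -
  have "\<bar>atom_gap \<mu> m K j (count_list (xs[i := y]) j) - atom_gap \<mu> m K j (count_list xs j)\<bar>
      \<le> (1 / (2 * real m) + K / real m) * \<bar>real (count_list (xs[i := y]) j) - real (count_list xs j)\<bar>"
    by (rule atom_gap_lipschitz[OF assms(1,2)])
  also have "\<dots> \<le> (1 / (2 * real m) + K / real m) * (of_bool (j = y) + of_bool (j = xs ! i))"
    using abs_length_filter_list_update_diff_le[OF assms(3), of "(=) j" y] assms(1,2)
    by (intro mult_left_mono) (simp_all add: count_list_eq_length_filter)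
  finally show ?thesis .
qed

lemma bounded_differences_tv_Phi_minorant:
  assumes "finite J" "m > 0" "K \<ge> 0"
  shows "bounded_differences m ((1 + 2 * K) / real m) (tv_Phi_minorant \<mu> m K J)"
  unfolding bounded_differences_def
proof (intro allI impI)
  fix xs :: "nat list" and i y
  assume "length xs = m" "i < m"
  then have i: "i < length xs" by simp
  define u where "u = xs ! i"
  define L where "L = 1 / (2 * real m) + K / real m"
  have L: "0 \<le> L" "K / real m \<le> L" using assms by (simp_all add: L_def)
  have atoms: "\<bar>atom_gap \<mu> m K j (count_list (xs[i := y]) j) - atom_gap \<mu> m K j (count_list xs j)\<bar>
      \<le> L * (of_bool (j = y) + of_bool (j = u))" for j
    unfolding L_def u_def by (rule abs_atom_gap_list_update_diff_le[OF assms(2,3) i])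
  have outside: "\<bar>K / real m * real (length (filter (\<lambda>x. x \<notin> J) (xs[i := y])))
      - K / real m * real (length (filter (\<lambda>x. x \<notin> J) xs))\<bar> \<le> L * (of_bool (y \<notin> J) + of_bool (u \<notin> J))"
  proof -
    have "\<bar>K / real m * real (length (filter (\<lambda>x. x \<notin> J) (xs[i := y])))
        - K / real m * real (length (filter (\<lambda>x. x \<notin> J) xs))\<bar>
        = K / real m * \<bar>real (length (filter (\<lambda>x. x \<notin> J) (xs[i := y])))
            - real (length (filter (\<lambda>x. x \<notin> J) xs))\<bar>"
      by (simp only: right_diff_distrib[symmetric] abs_mult) (use assms in simp)
    also have "\<dots> \<le> L * (of_bool (y \<notin> J) + of_bool (u \<notin> J))"
      using abs_length_filter_list_update_diff_le[OF i, of "\<lambda>x. x \<notin> J" y] L assms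
      by (intro mult_mono) (auto simp: u_def)
    finally show ?thesis .
  qed
  have "\<bar>tv_Phi_minorant \<mu> m K J (xs[i := y]) - tv_Phi_minorant \<mu> m K J xs\<bar>
      = \<bar>(\<Sum>j\<in>J. atom_gap \<mu> m K j (count_list (xs[i := y]) j) - atom_gap \<mu> m K j (count_list xs j))
          - (K / real m * real (length (filter (\<lambda>x. x \<notin> J) (xs[i := y])))
             - K / real m * real (length (filter (\<lambda>x. x \<notin> J) xs)))\<bar>"
    unfolding tv_Phi_minorant_def by (simp add: sum_subtractf algebra_simps)
  also have "\<dots> \<le> (\<Sum>j\<in>J. \<bar>atom_gap \<mu> m K j (count_list (xs[i := y]) j) - atom_gap \<mu> m K j (count_list xs j)\<bar>)
        + \<bar>K / real m * real (length (filter (\<lambda>x. x \<notin> J) (xs[i := y])))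
          - K / real m * real (length (filter (\<lambda>x. x \<notin> J) xs))\<bar>"
    by (rule order_trans[OF abs_triangle_ineq4]) (intro add_mono sum_abs order_refl)
  also have "\<dots> \<le> (\<Sum>j\<in>J. L * (of_bool (j = y) + of_bool (j = u))) + L * (of_bool (y \<notin> J) + of_bool (u \<notin> J))"
    by (intro add_mono sum_mono atoms outside)
  \<comment> \<open>Only the cells of the old value \<open>u\<close> and of the new value \<open>y\<close> change, by one point each.\<close>
  also have "\<dots> = L * 2"
    using assms(1) by (cases "y \<in> J"; cases "u \<in> J") (simp_all add: sum.distrib flip: sum_distrib_left)
  also have "\<dots> = (1 + 2 * K) / real m"
    by (simp add: L_def add_divide_distrib algebra_simps)
  finally show "\<bar>tv_Phi_minorant \<mu> m K J (xs[i := y]) - tv_Phi_minorant \<mu> m K J xs\<bar> \<le> (1 + 2 * K) / real m" .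
qed

lemma expectation_atom_gap_ge:
  assumes "m > 0" "0 \<le> K" "4 * sqrt 2 * K \<le> 1"
  shows "measure_pmf.expectation (replicate_pmf m \<mu>) (\<lambda>xs. atom_gap \<mu> m K j (count_list xs j))
           \<ge> - (2 * K / sqrt (real m)) * pmf \<mu> j"
proof -
  define M where "M = replicate_pmf m \<mu>"
  define dev where "dev = count_deviation ((=) j) (pmf \<mu> j)"
  define EA where "EA = measure_pmf.expectation M (\<lambda>xs. \<bar>dev xs\<bar>)"
  define ES where "ES = measure_pmf.expectation M (\<lambda>xs. sqrt (real (count_list xs j)))"
  have scale: "\<bar>a / real m - c\<bar> = \<bar>a - real m * c\<bar> / real m" for a c
  proof -
    have "a / real m - c = (a - real m * c) / real m" using assms(1) by (simp add: field_simps)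
    then show ?thesis by (simp add: abs_divide)
  qed
  have "atom_gap \<mu> m K j (count_list xs j)
      = 1 / (2 * real m) * \<bar>dev xs\<bar> - K / real m * sqrt (real (count_list xs j))" if "length xs = m" for xs
    using that by (simp add: atom_gap_def dev_def count_deviation_def count_list_eq_length_filter scale)
  then have "measure_pmf.expectation M (\<lambda>xs. atom_gap \<mu> m K j (count_list xs j))
      = measure_pmf.expectation M (\<lambda>xs. 1 / (2 * real m) * \<bar>dev xs\<bar> - K / real m * sqrt (real (count_list xs j)))"
    by (intro integral_cong_AE) (auto simp: AE_measure_pmf_iff M_def set_replicate_pmf)
  also have "\<dots> = 1 / (2 * real m) * EA - K / real m * ES"
  proof (subst Bochner_Integration.integral_diff)
    show "integrable (measure_pmf M) (\<lambda>xs. 1 / (2 * real m) * \<bar>dev xs\<bar>)"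
      unfolding M_def dev_def
      by (intro Bochner_Integration.integrable_mult_right integrable_measure_pmf_bounded[where B="real m"])
         (auto simp: set_replicate_pmf pmf_le_1 intro!: abs_count_deviation_le[THEN order_trans])
  qed (auto simp: EA_def ES_def M_def count_list_eq_length_filter intro!: integrable_count)
  finally have E: "measure_pmf.expectation M (\<lambda>xs. atom_gap \<mu> m K j (count_list xs j))
      = 1 / (2 * real m) * EA - K / real m * ES" .
  have "K / real m * ES \<le> 1 / (2 * real m) * EA + 2 * K / sqrt (real m) * pmf \<mu> j"
  proof (cases "pmf \<mu> j \<le> 1/4")
    case True
    then have "ES \<le> 2 * sqrt 2 * EA"
      using expectation_sqrt_count_le_abs_deviation[of \<mu> "(=) j" m]
      by (simp add: ES_def EA_def M_def dev_def measure_pmf_single count_list_eq_length_filter)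
    then have "K / real m * ES \<le> K / real m * (2 * sqrt 2 * EA)"
      using assms by (intro mult_left_mono) auto
    also have "\<dots> = (4 * sqrt 2 * K) * (1 / (2 * real m) * EA)"
      by (simp add: field_simps)
    also have "\<dots> \<le> 1 / (2 * real m) * EA"
      using assms by (intro mult_left_le_one_le) (auto simp: EA_def intro!: integral_nonneg_AE)
    finally have "K / real m * ES \<le> 1 / (2 * real m) * EA" .
    moreover have "0 \<le> 2 * K / sqrt (real m) * pmf \<mu> j" using assms by simp
    ultimately show ?thesis by linarith
  next
    case False
    have "1/2 \<le> sqrt (pmf \<mu> j)" using False by (intro real_le_rsqrt) (simp add: power2_eq_square)
    then have "sqrt (pmf \<mu> j) \<le> 2 * pmf \<mu> j"
      using mult_right_mono[of "1/2" "sqrt (pmf \<mu> j)" "sqrt (pmf \<mu> j)"] by simp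
    have "ES \<le> sqrt (real m) * sqrt (pmf \<mu> j)"
      using expectation_sqrt_count_le_sqrt[of m \<mu> "(=) j"]
      by (simp add: ES_def M_def measure_pmf_single count_list_eq_length_filter real_sqrt_mult)
    also have "\<dots> \<le> sqrt (real m) * (2 * pmf \<mu> j)"
      using \<open>sqrt (pmf \<mu> j) \<le> 2 * pmf \<mu> j\<close> by (intro mult_left_mono) auto
    finally have "ES \<le> sqrt (real m) * (2 * pmf \<mu> j)" .
    then have "K / real m * ES \<le> K / real m * (sqrt (real m) * (2 * pmf \<mu> j))"
      using assms by (intro mult_left_mono) auto
    also have "\<dots> = 2 * K / sqrt (real m) * pmf \<mu> j"
      using assms(1) by (simp add: field_simps)
    finally have "K / real m * ES \<le> 2 * K / sqrt (real m) * pmf \<mu> j" .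
    moreover have "0 \<le> 1 / (2 * real m) * EA" by (simp add: EA_def)
    ultimately show ?thesis by linarith
  qed
  then show ?thesis using E by (simp add: M_def)
qed

lemma expectation_tv_Phi_minorant_ge:
  assumes "m > 0" "finite J" "0 \<le> K" "4 * sqrt 2 * K \<le> 1"
    and tail: "measure_pmf.prob \<mu> (- J) \<le> 1 / sqrt (real m)"
  shows "measure_pmf.expectation (replicate_pmf m \<mu>) (tv_Phi_minorant \<mu> m K J) \<ge> - 3 * K / sqrt (real m)"
proof -
  define M where "M = replicate_pmf m \<mu>"
  have count_le: "count_list xs j \<le> m" if "xs \<in> set_pmf M" for xs j
    using that by (auto simp: M_def set_replicate_pmf intro: order_trans[OF count_le_length])
  have "measure_pmf.expectation M (tv_Phi_minorant \<mu> m K J)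
      = (\<Sum>j\<in>J. measure_pmf.expectation M (\<lambda>xs. atom_gap \<mu> m K j (count_list xs j)))
        - K / real m * measure_pmf.expectation M (\<lambda>xs. real (length (filter (\<lambda>x. x \<notin> J) xs)))"
  proof -
    have atom: "integrable (measure_pmf M) (\<lambda>xs. atom_gap \<mu> m K j (count_list xs j))" for j
      by (rule integrable_measure_pmf_comp_bounded_nat[where N=m]) (rule count_le)
    have "integrable (measure_pmf M) (\<lambda>xs. real (length (filter (\<lambda>x. x \<notin> J) xs)))"
      unfolding M_def by (rule integrable_count)
    then show ?thesis
      unfolding tv_Phi_minorant_def[abs_def]
      by (subst Bochner_Integration.integral_diff)
         (auto intro!: Bochner_Integration.integrable_sum atom
               simp: Bochner_Integration.integral_sum[OF atom])
  qed
  also have "measure_pmf.expectation M (\<lambda>xs. real (length (filter (\<lambda>x. x \<notin> J) xs)))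
      = real m * measure_pmf.prob \<mu> (- J)"
    unfolding M_def expectation_count by (simp add: Compl_eq)
  also have "(\<Sum>j\<in>J. measure_pmf.expectation M (\<lambda>xs. atom_gap \<mu> m K j (count_list xs j)))
      \<ge> (\<Sum>j\<in>J. - (2 * K / sqrt (real m)) * pmf \<mu> j)"
    unfolding M_def by (intro sum_mono expectation_atom_gap_ge assms)
  moreover have "(\<Sum>j\<in>J. - (2 * K / sqrt (real m)) * pmf \<mu> j) \<ge> - (2 * K / sqrt (real m))"
  proof -
    have "(\<Sum>j\<in>J. - (2 * K / sqrt (real m)) * pmf \<mu> j) = - (2 * K / sqrt (real m)) * measure_pmf.prob \<mu> J"
      using assms(2) by (simp only: sum_distrib_left[symmetric] measure_measure_pmf_finite)
    also have "\<dots> \<ge> - (2 * K / sqrt (real m)) * 1"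
      using assms by (intro mult_left_mono_neg) auto
    finally show ?thesis by simp
  qed
  moreover have "K / real m * (real m * measure_pmf.prob \<mu> (- J)) \<le> K / sqrt (real m)"
    using assms mult_left_mono[OF tail, of K] by simp
  ultimately show ?thesis by (simp add: M_def)
qed

lemma measure_pmf_tail_lessThan_le:
  fixes \<mu> :: "nat pmf"
  assumes "e > 0"
  obtains N where "measure_pmf.prob \<mu> (- {..<N}) \<le> e"
proof -
  have "(\<lambda>N. measure_pmf.prob \<mu> {..<N}) \<longlonglongrightarrow> measure_pmf.prob \<mu> (\<Union>N. {..<N})"
    by (rule measure_pmf.finite_Lim_measure_incseq) (auto simp: incseq_def)
  then have "(\<lambda>N. measure_pmf.prob \<mu> {..<N}) \<longlonglongrightarrow> 1"
    by (simp add: UN_lessThan_UNIV)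
  then obtain N where "measure_pmf.prob \<mu> {..<N} > 1 - e"
    using assms order_tendstoD(1)[of _ 1 sequentially "1 - e"] by (auto simp: eventually_sequentially)
  moreover have "measure_pmf.prob \<mu> (- {..<N}) = 1 - measure_pmf.prob \<mu> {..<N}"
    using measure_pmf.prob_compl[of "{..<N}" \<mu>] by (simp add: Compl_eq_Diff_UNIV)
  ultimately show ?thesis using that[of N] by linarith
qed

lemma ln_2_ge_quarter: "ln (2::real) \<ge> 1/4"
proof -
  have "exp (1/4::real) \<le> 1 + 1/4 + (1/4)\<^sup>2" by (rule exp_bound) auto
  also have "\<dots> \<le> 2" by (simp add: power2_eq_square)
  finally show ?thesis by (subst ln_ge_iff) auto
qed

lemma mcdiarmid_exponent_le:
  fixes \<delta> K :: real and m :: nat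
  assumes "0 < \<delta>" "\<delta> < 1" "m > 0" "0 \<le> K" "K \<le> 1/5"
  defines "s \<equiv> 3 * sqrt (ln (2 / \<delta>) / real m) - 3 * K / sqrt (real m)"
  shows "s > 0" and "exp (- 2 * s\<^sup>2 / (real m * ((1 + 2 * K) / real m)\<^sup>2)) \<le> \<delta> / 2"
proof -
  define L where "L = ln (2 / \<delta>)"
  define w where "w = sqrt L"
  have "ln 2 \<le> L" unfolding L_def using assms by (subst ln_le_cancel_iff) (auto simp: field_simps)
  then have L: "L \<ge> 1/4" using ln_2_ge_quarter by linarith
  have "1/2 \<le> w"
    unfolding w_def by (rule real_le_rsqrt) (use L in \<open>simp add: power2_eq_square\<close>)
  moreover have "w\<^sup>2 = L" using L by (simp add: w_def)
  ultimately have w: "w \<ge> 1/2" "w\<^sup>2 = L" by simp_all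
  have s: "s = (3 * w - 3 * K) / sqrt (real m)"
    unfolding s_def w_def L_def by (simp add: real_sqrt_divide diff_divide_distrib)
  have w_K: "9/5 * w \<le> 3 * w - 3 * K" using assms w by linarith
  show "s > 0" unfolding s using w_K w assms by (intro divide_pos_pos) auto
  have "L * (1 + 2 * K)\<^sup>2 \<le> L * (7/5)\<^sup>2" using assms L by (intro mult_left_mono power_mono) auto
  also have "\<dots> \<le> 2 * (9/5 * w)\<^sup>2" using w L by (simp add: power2_eq_square)
  also have "\<dots> \<le> 2 * (3 * w - 3 * K)\<^sup>2" using w_K w by (intro mult_left_mono power_mono) auto
  finally have "L \<le> 2 * (3 * w - 3 * K)\<^sup>2 / (1 + 2 * K)\<^sup>2"
    using assms by (simp add: le_divide_eq)
  also have "\<dots> = 2 * s\<^sup>2 / (real m * ((1 + 2 * K) / real m)\<^sup>2)"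
    unfolding s using assms by (simp add: power_divide power2_eq_square)
  finally have "L \<le> 2 * s\<^sup>2 / (real m * ((1 + 2 * K) / real m)\<^sup>2)" .
  then have "exp (- 2 * s\<^sup>2 / (real m * ((1 + 2 * K) / real m)\<^sup>2)) \<le> exp (- L)" by simp
  also have "exp (- L) = \<delta> / 2" unfolding L_def using assms by (simp add: exp_minus)
  finally show "exp (- 2 * s\<^sup>2 / (real m * ((1 + 2 * K) / real m)\<^sup>2)) \<le> \<delta> / 2" .
qed

theorem theorem2:
  fixes m :: nat and \<delta> :: real and \<mu> :: "nat pmf"
  assumes "m \<ge> 1"
    and "0 < \<delta>" and "\<delta> < 1"
    and "0 \<notin> set_pmf \<mu>"
  shows "measure_pmf.prob (replicate_pmf m \<mu>)
           {xs. tv_dist (emp_measure m xs) (pmf \<mu>)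
                  \<ge> 1 / (4 * sqrt 2) * Phi m (emp_measure m xs)
                    - 3 * sqrt (ln (2 / \<delta>) / real m)}
         \<ge> 1 - \<delta>"
proof -
  \<comment> \<open>The hypothesis \<open>0 \<notin> set_pmf \<mu>\<close> only encodes that the paper's \<open>\<mu>\<close> lives on \<open>{1,2,...}\<close>.\<close>
  define K :: real where "K = 1 / (4 * sqrt 2)"
  define s where "s = 3 * sqrt (ln (2 / \<delta>) / real m) - 3 * K / sqrt (real m)"
  have m: "m > 0" using assms(1) by simp
  have "5/4 \<le> sqrt (2::real)" by (rule real_le_rsqrt) (simp add: power2_eq_square)
  then have K: "0 \<le> K" "4 * sqrt 2 * K \<le> 1" "K \<le> 1/5" by (simp_all add: K_def field_simps)
  obtain N where tail: "measure_pmf.prob \<mu> (- {..<N}) \<le> 1 / sqrt (real m)"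
    using measure_pmf_tail_lessThan_le[of "1 / sqrt (real m)" \<mu>] m by auto
  define G where "G = tv_Phi_minorant \<mu> m K {..<N}"
  have EG: "measure_pmf.expectation (replicate_pmf m \<mu>) G \<ge> - 3 * K / sqrt (real m)"
    unfolding G_def by (rule expectation_tv_Phi_minorant_ge[OF m _ K(1,2) tail]) simp
  show ?thesis
  proof (rule order_trans[OF _ mcdiarmid_prob_ge[where c="(1 + 2 * K) / real m" and s=s and e="\<delta> / 2"]])
    show "bounded_differences m ((1 + 2 * K) / real m) G"
      unfolding G_def by (rule bounded_differences_tv_Phi_minorant[OF _ m K(1)]) simp
    show "s > 0" "exp (- 2 * s\<^sup>2 / (real m * ((1 + 2 * K) / real m)\<^sup>2)) \<le> \<delta> / 2"
      unfolding s_def by (rule mcdiarmid_exponent_le[OF assms(2,3) m K(1,3)])+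
    fix xs assume "G xs > measure_pmf.expectation (replicate_pmf m \<mu>) G - s"
    with EG have "G xs \<ge> - 3 * sqrt (ln (2 / \<delta>) / real m)" by (simp add: s_def)
    moreover have "G xs \<le> tv_dist (emp_measure m xs) (pmf \<mu>) - K * Phi m (emp_measure m xs)"
      unfolding G_def by (rule tv_Phi_minorant_le[OF _ m K(1)]) simp
    ultimately show "xs \<in> {xs. tv_dist (emp_measure m xs) (pmf \<mu>)
        \<ge> 1 / (4 * sqrt 2) * Phi m (emp_measure m xs) - 3 * sqrt (ln (2 / \<delta>) / real m)}"
      by (simp add: K_def)
  qed (use assms m K in simp_all)
qed

end
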